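(* Let $\langle S,L,\tau,\ell\rangle$ be a labelled Markov chain and $P\in\mathcal{P}_\tau$. The following are equivalent: (1) $P$ is optimal, i.e. $\gamma_P(s,t)=\delta_\tau(s,t)$ for all $s,t\in S$; (2) $\Gamma_P(\delta_\tau)=\delta_\tau$; (3) $\Gamma_P(\delta_\tau)\le\delta_\tau$ pointwise.
   Context: Labelled Markov chain: finite $S$, finite $L$, $\tau:S\to\mathcal{D}(S)$, $\ell:S\to L$. $\Omega(\mu,\nu)$ = couplings. $S^2_\Delta=\{(s,s)\}$, $S^2_1=\{(s,t)\mid\ell(s)\ne\ell(t)\}$. $\mathcal{P}_\tau$ = set of policies $P:S\times S\to\mathcal{D}(S\times S)$ with $P(s,t)\in\Omega(\tau(s),\tau(t))$ for $(s,t)\notin S^2_1$ and $P(s,t)$ the point mass at $(s,t)$ for $(s,t)\in S^2_1$. For $d:S\times S\to[0,1]$, $\Gamma_P(d)(s,t)=1$ if $(s,t)\in S^2_1$ and $\Gamma_P(d)(s,t)=\sum_{u,v}P(s,t)(u,v)\,d(u,v)$ otherwise; $\gamma_P$ is the least fixed point of $\Gamma_P$ (equal to the probability of reaching $S^2_1$ from $(s,t)$ in the Markov chain $\langle S\times S,P\rangle$). $\delta_\tau$ is the least fixed point of $\Delta_\tau$, where $\Delta_\tau(d)(s,t)=1$ if $\ell(s)\ne\ell(t)$ and $\inf_{\omega\in\Omega(\tau(s),\tau(t))}\sum_{u,v}\omega(u,v)d(u,v)$ otherwise; it is known that $\delta_\tau=\min_{P\in\mathcal{P}_\tau}\gamma_P$.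 *)

theory Defs
  imports "HOL-Probability.Probability"
begin

text \<open>A labelled Markov chain is given by a finite state type 's, a finite label type 'l,
  a transition function tau :: 's => 's pmf and a labelling ell :: 's => 'l.\<close>

definition couplings :: "'s pmf \<Rightarrow> 's pmf \<Rightarrow> ('s \<times> 's) pmf set" where
  "couplings \<mu> \<nu> = {\<omega>. map_pmf fst \<omega> = \<mu> \<and> map_pmf snd \<omega> = \<nu>}"

definition diag_pairs :: "('s \<times> 's) set" where
  "diag_pairs = {(s, s) | s. True}"

definition S1 :: "('s \<Rightarrow> 'l) \<Rightarrow> ('s \<times> 's) set" where
  "S1 ell = {(s, t). ell s \<noteq> ell t}"

definition policies :: "('s \<Rightarrow> 's pmf) \<Rightarrow> ('s \<Rightarrow> 'l) \<Rightarrow> ('s \<times> 's \<Rightarrow> ('s \<times> 's) pmf) set" where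
  "policies tau ell = {P. \<forall>s t.
      ((s, t) \<notin> S1 ell \<longrightarrow> P (s, t) \<in> couplings (tau s) (tau t)) \<and>
      ((s, t) \<in> S1 ell \<longrightarrow> P (s, t) = return_pmf (s, t))}"

text \<open>Least fixed point of an operator on the complete lattice of functions
  X => [0,1] (pointwise order), via the Knaster--Tarski formula:
  pointwise infimum of all pre-fixed points in that lattice.\<close>
definition lfp01 :: "(('a \<Rightarrow> real) \<Rightarrow> ('a \<Rightarrow> real)) \<Rightarrow> 'a \<Rightarrow> real" where
  "lfp01 F = (\<lambda>x. Inf {d x | d. (\<forall>y. 0 \<le> d y \<and> d y \<le> 1) \<and> (\<forall>y. F d y \<le> d y)})"

definition Gamma :: "('s::finite \<Rightarrow> 'l) \<Rightarrow> ('s \<times> 's \<Rightarrow> ('s \<times> 's) pmf)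
      \<Rightarrow> ('s \<times> 's \<Rightarrow> real) \<Rightarrow> ('s \<times> 's \<Rightarrow> real)" where
  "Gamma ell P d = (\<lambda>(s, t). if (s, t) \<in> S1 ell then 1
      else (\<Sum>(u, v)\<in>UNIV. pmf (P (s, t)) (u, v) * d (u, v)))"

definition gamma :: "('s::finite \<Rightarrow> 'l) \<Rightarrow> ('s \<times> 's \<Rightarrow> ('s \<times> 's) pmf) \<Rightarrow> ('s \<times> 's \<Rightarrow> real)" where
  "gamma ell P = lfp01 (Gamma ell P)"

definition Delta :: "('s::finite \<Rightarrow> 's pmf) \<Rightarrow> ('s \<Rightarrow> 'l)
      \<Rightarrow> ('s \<times> 's \<Rightarrow> real) \<Rightarrow> ('s \<times> 's \<Rightarrow> real)" where
  "Delta tau ell d = (\<lambda>(s, t). if ell s \<noteq> ell t then 1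
      else (INF \<omega>\<in>couplings (tau s) (tau t). \<Sum>(u, v)\<in>UNIV. pmf \<omega> (u, v) * d (u, v)))"

definition delta :: "('s::finite \<Rightarrow> 's pmf) \<Rightarrow> ('s \<Rightarrow> 'l) \<Rightarrow> ('s \<times> 's \<Rightarrow> real)" where
  "delta tau ell = lfp01 (Delta tau ell)"

definition optimal :: "('s::finite \<Rightarrow> 's pmf) \<Rightarrow> ('s \<Rightarrow> 'l) \<Rightarrow> ('s \<times> 's \<Rightarrow> ('s \<times> 's) pmf) \<Rightarrow> bool" where
  "optimal tau ell P \<longleftrightarrow> (\<forall>s t. gamma ell P (s, t) = delta tau ell (s, t))"

end

theory Submission
  imports Defs
begin

text \<open>Both operators are monotone on [0,1]-valued functions, so their least fixed points are
  fixed points (Knaster--Tarski).  Since P(s,t) is one of the couplings over which Delta takes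
  its infimum, Delta d <= Gamma P d for every d.  Hence delta = Delta delta <= Gamma P delta,
  which makes (2) and (3) equivalent, and Delta (gamma P) <= Gamma P (gamma P) = gamma P, so
  delta <= gamma P.  If Gamma P delta <= delta, then delta is a pre-fixed point of Gamma P,
  so gamma P <= delta and P is optimal; conversely, for an optimal P the fixed-point equation
  of gamma P reads Gamma P delta = delta.\<close>

definition unit_valued :: "('a \<Rightarrow> real) \<Rightarrow> bool" where
  "unit_valued d \<longleftrightarrow> (\<forall>x. 0 \<le> d x \<and> d x \<le> 1)"

lemma unit_valued_nonneg: "unit_valued d \<Longrightarrow> 0 \<le> d x"
  by (simp add: unit_valued_def)

lemma lfp01_eq_INF:
  "lfp01 F x = (INF d\<in>{d. unit_valued d \<and> F d \<le> d}. d x)"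
  unfolding lfp01_def unit_valued_def le_fun_def by (rule arg_cong[where f = Inf]) auto

lemma lfp01_least:
  assumes "unit_valued d" "F d \<le> d"
  shows "lfp01 F \<le> d"
proof (rule le_funI)
  fix x
  have "bdd_below ((\<lambda>d. d x) ` {d. unit_valued d \<and> F d \<le> d})"
    by (rule bdd_belowI[of _ 0]) (auto simp: unit_valued_def)
  then show "lfp01 F x \<le> d x"
    unfolding lfp01_eq_INF using assms by (intro cINF_lower) auto
qed

locale unit_monotone_operator =
  fixes F :: "('a \<Rightarrow> real) \<Rightarrow> 'a \<Rightarrow> real"
  assumes mono: "unit_valued d \<Longrightarrow> unit_valued e \<Longrightarrow> d \<le> e \<Longrightarrow> F d \<le> F e"
    and unit_valued: "unit_valued d \<Longrightarrow> unit_valued (F d)"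
begin

lemma one_pre_fixed: "unit_valued (\<lambda>_. 1) \<and> F (\<lambda>_. 1) \<le> (\<lambda>_. 1)"
proof -
  have "unit_valued (\<lambda>_. 1)" by (simp add: unit_valued_def)
  then show ?thesis using unit_valued by (auto simp: unit_valued_def le_fun_def)
qed

lemma lfp01_unit_valued: "unit_valued (lfp01 F)"
  unfolding unit_valued_def
proof
  fix x
  have "0 \<le> lfp01 F x"
    unfolding lfp01_eq_INF using one_pre_fixed
    by (intro cINF_greatest) (blast, auto simp: unit_valued_def)
  moreover have "lfp01 F x \<le> 1"
    using lfp01_least[of "\<lambda>_. 1" F] one_pre_fixed by (auto simp: le_fun_def)
  ultimately show "0 \<le> lfp01 F x \<and> lfp01 F x \<le> 1" ..
qed

lemma lfp01_pre_fixed: "F (lfp01 F) \<le> lfp01 F"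
proof (rule le_funI)
  fix x
  show "F (lfp01 F) x \<le> lfp01 F x"
    unfolding lfp01_eq_INF[of F x]
  proof (rule cINF_greatest)
    show "{d. unit_valued d \<and> F d \<le> d} \<noteq> {}" using one_pre_fixed by blast
    fix d assume d: "d \<in> {d. unit_valued d \<and> F d \<le> d}"
    then have "F (lfp01 F) \<le> F d"
      using mono lfp01_unit_valued lfp01_least by blast
    also have "\<dots> \<le> d" using d by blast
    finally show "F (lfp01 F) x \<le> d x" by (rule le_funD)
  qed
qed

lemma lfp01_fixpoint: "F (lfp01 F) = lfp01 F"
proof (rule order_antisym)
  show "F (lfp01 F) \<le> lfp01 F" by (rule lfp01_pre_fixed)
  have "F (F (lfp01 F)) \<le> F (lfp01 F)"
    by (intro mono unit_valued lfp01_unit_valued lfp01_pre_fixed)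
  then show "lfp01 F \<le> F (lfp01 F)"
    by (intro lfp01_least unit_valued lfp01_unit_valued)
qed

end

lemma sum_pmf_mult_nonneg:
  fixes d :: "'a::finite \<Rightarrow> real"
  assumes "\<And>x. 0 \<le> d x"
  shows "0 \<le> (\<Sum>x\<in>UNIV. pmf \<omega> x * d x)"
  using assms by (intro sum_nonneg) simp

lemma sum_pmf_mult_le_one:
  fixes d :: "'a::finite \<Rightarrow> real"
  assumes "unit_valued d"
  shows "(\<Sum>x\<in>UNIV. pmf \<omega> x * d x) \<le> 1"
proof -
  have "(\<Sum>x\<in>UNIV. pmf \<omega> x * d x) \<le> (\<Sum>x\<in>UNIV. pmf \<omega> x)"
    using assms by (intro sum_mono) (simp add: unit_valued_def mult_left_le)
  also have "\<dots> = 1" by (rule sum_pmf_eq_1) auto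
  finally show ?thesis .
qed

lemma sum_pmf_mult_mono:
  fixes d e :: "'a::finite \<Rightarrow> real"
  assumes "d \<le> e"
  shows "(\<Sum>x\<in>UNIV. pmf \<omega> x * d x) \<le> (\<Sum>x\<in>UNIV. pmf \<omega> x * e x)"
  using assms by (intro sum_mono mult_left_mono) (auto simp: le_fun_def)

lemma Gamma_apply:
  "Gamma ell P d (s, t) =
    (if (s, t) \<in> S1 ell then 1 else \<Sum>x\<in>UNIV. pmf (P (s, t)) x * d x)"
  by (simp add: Gamma_def case_prod_unfold)

lemma Delta_apply:
  "Delta tau ell d (s, t) =
    (if ell s \<noteq> ell t then 1 else INF \<omega>\<in>couplings (tau s) (tau t). \<Sum>x\<in>UNIV. pmf \<omega> x * d x)"
  by (simp add: Delta_def case_prod_unfold)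

lemma pair_pmf_in_couplings: "pair_pmf \<mu> \<nu> \<in> couplings \<mu> \<nu>"
  unfolding couplings_def by (simp add: map_fst_pair_pmf map_snd_pair_pmf)

lemma couplings_nonempty: "couplings \<mu> \<nu> \<noteq> {}"
  using pair_pmf_in_couplings by blast

lemma INF_couplings_le:
  fixes d :: "'s::finite \<times> 's \<Rightarrow> real"
  assumes "\<And>x. 0 \<le> d x" "\<omega> \<in> couplings \<mu> \<nu>"
  shows "(INF \<omega>\<in>couplings \<mu> \<nu>. \<Sum>x\<in>UNIV. pmf \<omega> x * d x) \<le> (\<Sum>x\<in>UNIV. pmf \<omega> x * d x)"
  using assms sum_pmf_mult_nonneg[OF assms(1)]
  by (intro cINF_lower bdd_belowI[of _ 0]) auto

lemma unit_monotone_operator_Gamma: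
  fixes ell :: "'s::finite \<Rightarrow> 'l"
  shows "unit_monotone_operator (Gamma ell P)"
proof
  fix d e :: "'s \<times> 's \<Rightarrow> real"
  assume "d \<le> e"
  then show "Gamma ell P d \<le> Gamma ell P e"
    by (auto simp: le_fun_def Gamma_apply intro: sum_pmf_mult_mono)
next
  fix d :: "'s \<times> 's \<Rightarrow> real"
  assume "unit_valued d"
  then have "0 \<le> (\<Sum>x\<in>UNIV. pmf \<omega> x * d x) \<and> (\<Sum>x\<in>UNIV. pmf \<omega> x * d x) \<le> 1" for \<omega>
    by (auto simp: unit_valued_def intro: sum_pmf_mult_nonneg sum_pmf_mult_le_one)
  then show "unit_valued (Gamma ell P d)"
    by (auto simp: unit_valued_def Gamma_apply)
qed

lemma unit_monotone_operator_Delta: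
  fixes tau :: "'s::finite \<Rightarrow> 's pmf"
  shows "unit_monotone_operator (Delta tau ell)"
proof
  fix d e :: "'s \<times> 's \<Rightarrow> real"
  assume "unit_valued d" "d \<le> e"
  have "(INF \<omega>\<in>couplings (tau s) (tau t). \<Sum>x\<in>UNIV. pmf \<omega> x * d x)
      \<le> (INF \<omega>\<in>couplings (tau s) (tau t). \<Sum>x\<in>UNIV. pmf \<omega> x * e x)" for s t
    using couplings_nonempty \<open>d \<le> e\<close> \<open>unit_valued d\<close>
    by (intro cINF_mono bdd_belowI[of _ 0])
       (auto intro: sum_pmf_mult_nonneg sum_pmf_mult_mono unit_valued_nonneg)
  then show "Delta tau ell d \<le> Delta tau ell e"
    by (auto simp: le_fun_def Delta_apply)
next
  fix d :: "'s \<times> 's \<Rightarrow> real"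
  assume d: "unit_valued d"
  have "0 \<le> (INF \<omega>\<in>couplings (tau s) (tau t). \<Sum>x\<in>UNIV. pmf \<omega> x * d x)" for s t
    using d couplings_nonempty
    by (intro cINF_greatest sum_pmf_mult_nonneg unit_valued_nonneg) auto
  moreover have "(INF \<omega>\<in>couplings (tau s) (tau t). \<Sum>x\<in>UNIV. pmf \<omega> x * d x) \<le> 1" for s t
  proof -
    have "(INF \<omega>\<in>couplings (tau s) (tau t). \<Sum>x\<in>UNIV. pmf \<omega> x * d x)
        \<le> (\<Sum>x\<in>UNIV. pmf (pair_pmf (tau s) (tau t)) x * d x)"
      using d by (intro INF_couplings_le pair_pmf_in_couplings unit_valued_nonneg)
    also have "\<dots> \<le> 1" by (rule sum_pmf_mult_le_one[OF d])
    finally show ?thesis .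
  qed
  ultimately show "unit_valued (Delta tau ell d)"
    by (auto simp: unit_valued_def Delta_apply)
qed

lemma Delta_le_Gamma:
  assumes "P \<in> policies tau ell" "\<And>x. 0 \<le> d x"
  shows "Delta tau ell d \<le> Gamma ell P d"
proof (rule le_funI, clarify)
  fix s t
  show "Delta tau ell d (s, t) \<le> Gamma ell P d (s, t)"
  proof (cases "ell s = ell t")
    case True
    then have "P (s, t) \<in> couplings (tau s) (tau t)"
      using assms(1) by (auto simp: policies_def S1_def)
    with True show ?thesis
      by (simp add: Delta_apply Gamma_apply S1_def INF_couplings_le assms(2))
  qed (simp add: Delta_apply Gamma_apply S1_def)
qed

lemma delta_fixpoint: "Delta tau ell (delta tau ell) = delta tau ell"
  unfolding delta_def by (rule unit_monotone_operator.lfp01_fixpoint[OF unit_monotone_operator_Delta])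

lemma delta_unit_valued: "unit_valued (delta tau ell)"
  unfolding delta_def by (rule unit_monotone_operator.lfp01_unit_valued[OF unit_monotone_operator_Delta])

lemma gamma_fixpoint: "Gamma ell P (gamma ell P) = gamma ell P"
  unfolding gamma_def by (rule unit_monotone_operator.lfp01_fixpoint[OF unit_monotone_operator_Gamma])

lemma gamma_unit_valued: "unit_valued (gamma ell P)"
  unfolding gamma_def by (rule unit_monotone_operator.lfp01_unit_valued[OF unit_monotone_operator_Gamma])

lemma delta_le_gamma:
  assumes "P \<in> policies tau ell"
  shows "delta tau ell \<le> gamma ell P"
proof -
  have "Delta tau ell (gamma ell P) \<le> Gamma ell P (gamma ell P)"
    by (intro Delta_le_Gamma assms unit_valued_nonneg gamma_unit_valued)
  also have "\<dots> = gamma ell P" by (rule gamma_fixpoint)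
  finally show ?thesis
    unfolding delta_def by (intro lfp01_least gamma_unit_valued)
qed

lemma delta_le_Gamma_delta:
  assumes "P \<in> policies tau ell"
  shows "delta tau ell \<le> Gamma ell P (delta tau ell)"
proof -
  have "delta tau ell = Delta tau ell (delta tau ell)" by (rule delta_fixpoint[symmetric])
  also have "\<dots> \<le> Gamma ell P (delta tau ell)"
    by (intro Delta_le_Gamma assms unit_valued_nonneg delta_unit_valued)
  finally show ?thesis .
qed

lemma gamma_le_delta_if_Gamma_delta_le:
  assumes "Gamma ell P (delta tau ell) \<le> delta tau ell"
  shows "gamma ell P \<le> delta tau ell"
  unfolding gamma_def using assms delta_unit_valued by (rule lfp01_least[rotated])

lemma optimal_iff_gamma_eq_delta: "optimal tau ell P \<longleftrightarrow> gamma ell P = delta tau ell"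
  unfolding optimal_def by auto

theorem mainTheorem14:
  fixes tau :: "'s::finite \<Rightarrow> 's pmf" and ell :: "'s \<Rightarrow> 'l::finite"
    and P :: "'s \<times> 's \<Rightarrow> ('s \<times> 's) pmf"
  assumes "P \<in> policies tau ell"
  shows "(optimal tau ell P \<longleftrightarrow> Gamma ell P (delta tau ell) = delta tau ell)
    \<and> (Gamma ell P (delta tau ell) = delta tau ell
         \<longleftrightarrow> (\<forall>s t. Gamma ell P (delta tau ell) (s, t) \<le> delta tau ell (s, t)))"
proof -
  have pointwise: "(\<forall>s t. Gamma ell P (delta tau ell) (s, t) \<le> delta tau ell (s, t))
      \<longleftrightarrow> Gamma ell P (delta tau ell) \<le> delta tau ell"
    by (auto simp: le_fun_def)
  have fixpoint_iff_le: "Gamma ell P (delta tau ell) = delta tau ell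
      \<longleftrightarrow> Gamma ell P (delta tau ell) \<le> delta tau ell"
    using delta_le_Gamma_delta[OF assms] by auto
  have "optimal tau ell P \<longleftrightarrow> Gamma ell P (delta tau ell) \<le> delta tau ell"
    unfolding optimal_iff_gamma_eq_delta
    using gamma_le_delta_if_Gamma_delta_le delta_le_gamma[OF assms] gamma_fixpoint
    by (metis order_antisym)
  then show ?thesis
    unfolding pointwise fixpoint_iff_le by blast
qed

end
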